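(* Let $(X,A)$ be a relative fat CW complex with fat skeleta $X^{(n)}$. For each $n\ge0$, the canonical map $\hat i_n:X^{(n-1)}\to X^{(n)}$ is an induction.
   Context: An induction is an injective smooth map that is a diffeomorphism onto its image with the subset diffeology. Let $\ell(t)=0$ for $t\le0$, $e^{-1/t}$ for $t>0$; $\alpha_0=\int_0^1\ell(3x)\ell(3-3x)dx$; $\lambda(t)=\frac1{\alpha_0}\int_0^t\ell(3x)\ell(3-3x)dx$; $\phi(t)=\int_0^{1/2+t}\lambda(x)dx$. For integers $n,m\ge0$: $\mathbb{D}^{n,m}=\{(u,v)\in\mathbb{R}^n\times\mathbb{R}^m:\|u\|\ge1-\phi(2-\|u\|-\|v\|)\}$, $\mathbb{S}^{n-1,m}=\{(u,v):\|u\|\ge1\}$ (empty for $n=0$), with subset diffeologies. A relative fat CW complex $(X,A)$ consists of a diffeological space $X$, subspaces $A=X^{(-1)}\subset X^{(0)}\subset\cdots$, index sets $J_n$, maps $m_n:J_n\to\mathbb{N}_0$ and smooth maps $h_n:\coprod_{j\in J_n}\mathbb{S}^{n-1,m_n(j)}\to X^{(n-1)}$ such that $X^{(n)}$ is the pushout in the category of diffeological spaces of the inclusion $i_n:\coprod_j\mathbb{S}^{n-1,m_n(j)}\hookrightarrow\coprod_j\mathbb{D}^{n,m_n(j)}$ and $h_n$, with induced maps $\hat i_n:X^{(n-1)}\to X^{(n)}$ and $\hat h_n:\coprod_j\mathbb{D}^{n,m_n(j)}\to X^{(n)}$, and $X$ is the diffeological colimit of the $X^{(n)}$. *)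

theory Defs
  imports "HOL-Analysis.Analysis"
begin

type_synonym vec = "nat \<Rightarrow> real"

definition Rn :: "nat \<Rightarrow> vec set" where
  "Rn n = {x. \<forall>i\<ge>n. x i = 0}"

text \<open>Open subsets of R^n (the product topology on nat => real restricts to
  the Euclidean topology on Rn n).\<close>
definition open_in_Rn :: "nat \<Rightarrow> vec set \<Rightarrow> bool" where
  "open_in_Rn n U \<longleftrightarrow> openin (top_of_set (Rn n)) U"

definition enorm :: "nat \<Rightarrow> vec \<Rightarrow> real" where
  "enorm n u = sqrt (\<Sum>i<n. (u i)\<^sup>2)"

fun Ck :: "nat \<Rightarrow> nat \<Rightarrow> vec set \<Rightarrow> (vec \<Rightarrow> real) \<Rightarrow> bool" where
  "Ck 0 n U F \<longleftrightarrow> continuous_on U F"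
| "Ck (Suc k) n U F \<longleftrightarrow> continuous_on U F \<and>
     (\<forall>i<n. \<exists>G. (\<forall>x\<in>U. ((\<lambda>t. F (x(i := x i + t))) has_real_derivative G x) (at 0))
                 \<and> Ck k n U G)"

definition smooth_fun :: "nat \<Rightarrow> vec set \<Rightarrow> (vec \<Rightarrow> real) \<Rightarrow> bool" where
  "smooth_fun n U F \<longleftrightarrow> (\<forall>k. Ck k n U F)"

definition smooth_eucl :: "nat \<Rightarrow> vec set \<Rightarrow> nat \<Rightarrow> vec set \<Rightarrow> (vec \<Rightarrow> vec) \<Rightarrow> bool" where
  "smooth_eucl m V n U f \<longleftrightarrow> f ` V \<subseteq> U \<and> (\<forall>i<n. smooth_fun m V (\<lambda>y. f y i))"

text \<open>A diffeology on a set X (inside the type 'a) is given by its plots: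
  D n U p means that p (restricted to U) is a plot with domain the open
  set U of R^n.\<close>
type_synonym 'a diffeology = "nat \<Rightarrow> vec set \<Rightarrow> (vec \<Rightarrow> 'a) \<Rightarrow> bool"

definition diffeology :: "'a set \<Rightarrow> 'a diffeology \<Rightarrow> bool" where
  "diffeology X D \<longleftrightarrow>
     (\<forall>n U p. D n U p \<longrightarrow> open_in_Rn n U \<and> p ` U \<subseteq> X) \<and>
     (\<forall>n U p q. D n U p \<longrightarrow> (\<forall>x\<in>U. p x = q x) \<longrightarrow> D n U q) \<and>
     (\<forall>n U x. open_in_Rn n U \<longrightarrow> x \<in> X \<longrightarrow> D n U (\<lambda>_. x)) \<and>
     (\<forall>n U p. open_in_Rn n U \<longrightarrow> p ` U \<subseteq> X \<longrightarrow>
        (\<forall>u\<in>U. \<exists>V. open_in_Rn n V \<and> u \<in> V \<and> V \<subseteq> U \<and> D n V p) \<longrightarrow> D n U p) \<and>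
     (\<forall>n U p m V f. D n U p \<longrightarrow> open_in_Rn m V \<longrightarrow> smooth_eucl m V n U f \<longrightarrow> D m V (p \<circ> f))"

definition smooth_map :: "'a set \<Rightarrow> 'a diffeology \<Rightarrow> 'b set \<Rightarrow> 'b diffeology \<Rightarrow> ('a \<Rightarrow> 'b) \<Rightarrow> bool" where
  "smooth_map X DX Y DY f \<longleftrightarrow> f ` X \<subseteq> Y \<and> (\<forall>n U p. DX n U p \<longrightarrow> DY n U (f \<circ> p))"

definition subset_diffeology :: "'a diffeology \<Rightarrow> 'a set \<Rightarrow> 'a diffeology" where
  "subset_diffeology D S = (\<lambda>n U p. D n U p \<and> p ` U \<subseteq> S)"

definition diffeomorphism :: "'a set \<Rightarrow> 'a diffeology \<Rightarrow> 'b set \<Rightarrow> 'b diffeology \<Rightarrow> ('a \<Rightarrow> 'b) \<Rightarrow> bool" where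
  "diffeomorphism X DX Y DY f \<longleftrightarrow> bij_betw f X Y \<and> smooth_map X DX Y DY f
      \<and> smooth_map Y DY X DX (inv_into X f)"

definition induction :: "'a set \<Rightarrow> 'a diffeology \<Rightarrow> 'b set \<Rightarrow> 'b diffeology \<Rightarrow> ('a \<Rightarrow> 'b) \<Rightarrow> bool" where
  "induction X DX Y DY f \<longleftrightarrow> inj_on f X \<and> smooth_map X DX Y DY f
      \<and> diffeomorphism X DX (f ` X) (subset_diffeology DY (f ` X)) f"

definition prod_Rn :: "nat \<Rightarrow> nat \<Rightarrow> (vec \<times> vec) set" where
  "prod_Rn n m = Rn n \<times> Rn m"

definition std_diffeology :: "nat \<Rightarrow> nat \<Rightarrow> (vec \<times> vec) diffeology" where
  "std_diffeology n m = (\<lambda>k U p. open_in_Rn k U \<and> p ` U \<subseteq> prod_Rn n m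
      \<and> (\<forall>i<n. smooth_fun k U (\<lambda>y. fst (p y) i))
      \<and> (\<forall>i<m. smooth_fun k U (\<lambda>y. snd (p y) i)))"

definition coprod_set :: "'j set \<Rightarrow> ('j \<Rightarrow> 'a set) \<Rightarrow> ('j \<times> 'a) set" where
  "coprod_set J K = {(j, x). j \<in> J \<and> x \<in> K j}"

definition coprod_diffeology :: "'j set \<Rightarrow> ('j \<Rightarrow> 'a set) \<Rightarrow> ('j \<Rightarrow> 'a diffeology) \<Rightarrow> ('j \<times> 'a) diffeology" where
  "coprod_diffeology J K E = (\<lambda>n U p. open_in_Rn n U \<and> p ` U \<subseteq> coprod_set J K \<and>
      (\<forall>x\<in>U. \<exists>V. open_in_Rn n V \<and> x \<in> V \<and> V \<subseteq> U \<and>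
         (\<exists>j\<in>J. \<exists>q. E j n V q \<and> (\<forall>y\<in>V. p y = (j, q y)))))"

definition ell :: "real \<Rightarrow> real" where
  "ell t = (if t \<le> 0 then 0 else exp (- 1 / t))"

definition sint :: "real \<Rightarrow> real \<Rightarrow> (real \<Rightarrow> real) \<Rightarrow> real" where
  "sint a b f = (if a \<le> b then integral {a..b} f else - integral {b..a} f)"

definition bump :: "real \<Rightarrow> real" where
  "bump x = ell (3 * x) * ell (3 - 3 * x)"

definition alpha0 :: real where
  "alpha0 = integral {0..1} bump"

definition lam :: "real \<Rightarrow> real" where
  "lam t = sint 0 t bump / alpha0"

definition phi :: "real \<Rightarrow> real" where
  "phi t = sint 0 (1/2 + t) lam"

definition fat_disk :: "nat \<Rightarrow> nat \<Rightarrow> (vec \<times> vec) set" where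
  "fat_disk n m = {(u, v) \<in> prod_Rn n m. enorm n u \<ge> 1 - phi (2 - enorm n u - enorm m v)}"

definition fat_sphere :: "nat \<Rightarrow> nat \<Rightarrow> (vec \<times> vec) set" where
  "fat_sphere n m = {(u, v) \<in> prod_Rn n m. enorm n u \<ge> 1}"
  \<comment> \<open>this is S^{n-1,m}; it is empty for n = 0\<close>

definition fat_disk_diff :: "nat \<Rightarrow> nat \<Rightarrow> (vec \<times> vec) diffeology" where
  "fat_disk_diff n m = subset_diffeology (std_diffeology n m) (fat_disk n m)"

definition fat_sphere_diff :: "nat \<Rightarrow> nat \<Rightarrow> (vec \<times> vec) diffeology" where
  "fat_sphere_diff n m = subset_diffeology (std_diffeology n m) (fat_sphere n m)"

text \<open>The square  S --f--> B,  S --g--> C,  B --fb--> P,  C --gc--> P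
  is a pushout in the category of diffeological spaces: it commutes,
  P is the set-theoretic pushout (jointly surjective, with the identifications
  exactly the equivalence relation generated by f s ~ g s), and the
  diffeology of P is the final (quotient) diffeology of the coproduct B + C.\<close>
definition diff_pushout ::
  "'s set \<Rightarrow> 's diffeology \<Rightarrow> 'b set \<Rightarrow> 'b diffeology \<Rightarrow> 'c set \<Rightarrow> 'c diffeology
   \<Rightarrow> 'p set \<Rightarrow> 'p diffeology \<Rightarrow> ('s \<Rightarrow> 'b) \<Rightarrow> ('s \<Rightarrow> 'c) \<Rightarrow> ('b \<Rightarrow> 'p) \<Rightarrow> ('c \<Rightarrow> 'p) \<Rightarrow> bool" where
  "diff_pushout S DS B DB C DC P DP f g fb gc \<longleftrightarrow>
     smooth_map S DS B DB f \<and> smooth_map S DS C DC g \<and>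
     fb ` B \<subseteq> P \<and> gc ` C \<subseteq> P \<and>
     (\<forall>s\<in>S. fb (f s) = gc (g s)) \<and>
     P = fb ` B \<union> gc ` C \<and>
     (\<forall>x\<in>B <+> C. \<forall>y\<in>B <+> C.
        case_sum fb gc x = case_sum fb gc y \<longleftrightarrow>
        (x, y) \<in> (({(Inl (f s), Inr (g s)) | s. s \<in> S}) \<union> ({(Inl (f s), Inr (g s)) | s. s \<in> S})\<inverse>)\<^sup>*) \<and>
     (\<forall>n U p. DP n U p \<longleftrightarrow> open_in_Rn n U \<and> p ` U \<subseteq> P \<and>
        (\<forall>x\<in>U. \<exists>V. open_in_Rn n V \<and> x \<in> V \<and> V \<subseteq> U \<and>
           ((\<exists>q. DB n V q \<and> (\<forall>y\<in>V. p y = fb (q y))) \<or>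
            (\<exists>q. DC n V q \<and> (\<forall>y\<in>V. p y = gc (q y))))))"

definition diff_seq_colimit ::
  "'a set \<Rightarrow> 'a diffeology \<Rightarrow> (nat \<Rightarrow> 'a set) \<Rightarrow> (nat \<Rightarrow> 'a diffeology) \<Rightarrow> bool" where
  "diff_seq_colimit X DX Xs DXs \<longleftrightarrow>
     (\<forall>k. Xs k \<subseteq> Xs (Suc k)) \<and> X = (\<Union>k. Xs k) \<and>
     (\<forall>n U p. DX n U p \<longleftrightarrow> open_in_Rn n U \<and> p ` U \<subseteq> X \<and>
        (\<forall>x\<in>U. \<exists>V. open_in_Rn n V \<and> x \<in> V \<and> V \<subseteq> U \<and> (\<exists>k. DXs k n V p)))"

text \<open>Indexing convention: Xs 0 = A = X^(-1), and Xs (Suc n) = X^(n).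
  Cells of dimension n are indexed by J n, with m n j the extra dimension,
  attaching map h n : coprod S^{n-1, m n j} -> X^(n-1), and
  hh n : coprod D^{n, m n j} -> X^(n) the induced map; the induced map
  X^(n-1) -> X^(n) is the inclusion.\<close>
definition rel_fat_CW ::
  "'a set \<Rightarrow> 'a diffeology \<Rightarrow> (nat \<Rightarrow> 'a set) \<Rightarrow> (nat \<Rightarrow> 'a diffeology)
   \<Rightarrow> (nat \<Rightarrow> 'j set) \<Rightarrow> (nat \<Rightarrow> 'j \<Rightarrow> nat)
   \<Rightarrow> (nat \<Rightarrow> 'j \<times> (vec \<times> vec) \<Rightarrow> 'a) \<Rightarrow> (nat \<Rightarrow> 'j \<times> (vec \<times> vec) \<Rightarrow> 'a) \<Rightarrow> bool" where
  "rel_fat_CW X DX Xs DXs J m h hh \<longleftrightarrow>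
     diffeology X DX \<and> (\<forall>k. diffeology (Xs k) (DXs k)) \<and>
     (\<forall>n. diff_pushout
        (coprod_set (J n) (\<lambda>j. fat_sphere n (m n j)))
        (coprod_diffeology (J n) (\<lambda>j. fat_sphere n (m n j)) (\<lambda>j. fat_sphere_diff n (m n j)))
        (coprod_set (J n) (\<lambda>j. fat_disk n (m n j)))
        (coprod_diffeology (J n) (\<lambda>j. fat_disk n (m n j)) (\<lambda>j. fat_disk_diff n (m n j)))
        (Xs n) (DXs n)
        (Xs (Suc n)) (DXs (Suc n))
        (\<lambda>x. x) (h n) (hh n) (\<lambda>x. x)) \<and>
     diff_seq_colimit X DX Xs DXs"

end

theory Submission
  imports Defs
begin

text \<open>The skeleton X^(n) is the pushout of X^(n-1) and the fat disks along the fat spheres,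
  which carry the subset diffeology of the disks. Gluing only identifies a point of a disk with a
  point of X^(n-1) when the former lies on a sphere. So a plot of X^(n) with values in X^(n-1) is
  locally either a plot of X^(n-1), or the image of a plot of the disks that lies in the spheres;
  the latter is a plot of the spheres, and composing it with the smooth attaching map gives a
  plot of X^(n-1). Hence X^(n-1) carries the subset diffeology of X^(n).\<close>

lemma diffeology_plotD:
  assumes "diffeology X D" "D n U p"
  shows "open_in_Rn n U" "p ` U \<subseteq> X"
proof -
  have "\<forall>n U p. D n U p \<longrightarrow> open_in_Rn n U \<and> p ` U \<subseteq> X"
    using assms(1) unfolding diffeology_def by (elim conjE) assumption
  then show "open_in_Rn n U" "p ` U \<subseteq> X"
    using assms(2) by blast+
qed

lemma diffeology_plot_cong:
  assumes "diffeology X D" "D n U p" "\<And>x. x \<in> U \<Longrightarrow> p x = q x"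
  shows "D n U q"
proof -
  have "\<forall>n U p q. D n U p \<longrightarrow> (\<forall>x\<in>U. p x = q x) \<longrightarrow> D n U q"
    using assms(1) unfolding diffeology_def by (elim conjE) assumption
  then show ?thesis
    using assms(2,3) by blast
qed

lemma diffeology_plot_localI:
  assumes "diffeology X D" "open_in_Rn n U" "p ` U \<subseteq> X"
    and "\<And>u. u \<in> U \<Longrightarrow> \<exists>V. open_in_Rn n V \<and> u \<in> V \<and> V \<subseteq> U \<and> D n V p"
  shows "D n U p"
proof -
  have "\<forall>n U p. open_in_Rn n U \<longrightarrow> p ` U \<subseteq> X \<longrightarrow>
      (\<forall>u\<in>U. \<exists>V. open_in_Rn n V \<and> u \<in> V \<and> V \<subseteq> U \<and> D n V p) \<longrightarrow> D n U p"
    using assms(1) unfolding diffeology_def by (elim conjE) assumption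
  then show ?thesis
    using assms(2-4) by blast
qed

lemma induction_inclusionI:
  assumes dC: "diffeology C DC" and "C \<subseteq> P"
    and plot_up: "\<And>k U p. DC k U p \<Longrightarrow> DP k U p"
    and plot_down: "\<And>k U p. DP k U p \<Longrightarrow> p ` U \<subseteq> C \<Longrightarrow> DC k U p"
  shows "induction C DC P DP (\<lambda>x. x)"
proof -
  have inv_plot: "DC k U (inv_into C (\<lambda>x. x) \<circ> p)" if "DP k U p" "p ` U \<subseteq> C" for k U p
  proof (rule diffeology_plot_cong[OF dC, OF plot_down[OF that]])
    fix y
    assume "y \<in> U"
    then show "p y = (inv_into C (\<lambda>x. x) \<circ> p) y"
      using \<open>p ` U \<subseteq> C\<close> by (auto intro: inv_into_f_f[symmetric])
  qed
  have "smooth_map C DC P DP (\<lambda>x. x)"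
    using \<open>C \<subseteq> P\<close> plot_up unfolding smooth_map_def by (simp add: comp_def)
  moreover have "smooth_map C DC C (subset_diffeology DP C) (\<lambda>x. x)"
    using plot_up diffeology_plotD(2)[OF dC]
    unfolding smooth_map_def subset_diffeology_def by (simp add: comp_def)
  moreover have "smooth_map C (subset_diffeology DP C) C DC (inv_into C (\<lambda>x. x))"
    using inv_plot unfolding smooth_map_def subset_diffeology_def by (auto intro: inv_into_into)
  ultimately show ?thesis
    unfolding induction_def diffeomorphism_def by (simp add: bij_betw_def)
qed

lemma diff_pushout_glued_point_in_subspace:
  assumes po: "diff_pushout S DS B DB C DC P DP (\<lambda>x. x) g fb (\<lambda>x. x)"
    and "b \<in> B" "c \<in> C" "fb b = c"
  shows "b \<in> S"
proof -
  let ?R = "{(Inl s, Inr (g s)) | s. s \<in> S}"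
  have glue_rel: "\<forall>x\<in>B <+> C. \<forall>y\<in>B <+> C.
      case_sum fb (\<lambda>x. x) x = case_sum fb (\<lambda>x. x) y \<longleftrightarrow> (x, y) \<in> (?R \<union> ?R\<inverse>)\<^sup>*"
    using po unfolding diff_pushout_def by (elim conjE) (simp only:)
  have "Inl b \<in> B <+> C" "Inr c \<in> B <+> C"
    using assms(2,3) by auto
  from glue_rel[rule_format, OF this] have "(Inl b, Inr c) \<in> (?R \<union> ?R\<inverse>)\<^sup>*"
    using \<open>fb b = c\<close> by simp
  \<comment> \<open>Every edge joins a left to a right summand, so the path leaves \<open>Inl b\<close> along \<open>(Inl b, Inr (g b))\<close> with \<open>b \<in> S\<close>.\<close>
  then show ?thesis
  proof (cases rule: converse_rtranclE)
    case (step z)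
    then show ?thesis by blast
  qed simp
qed

lemma diff_pushout_along_subspace_induction:
  assumes po: "diff_pushout S DS B DB C DC P DP (\<lambda>x. x) g fb (\<lambda>x. x)"
    and dC: "diffeology C DC"
    and DB_range: "\<And>k V q. DB k V q \<Longrightarrow> q ` V \<subseteq> B"
    and DS_subspace: "\<And>k V q. DB k V q \<Longrightarrow> q ` V \<subseteq> S \<Longrightarrow> DS k V q"
  shows "induction C DC P DP (\<lambda>x. x)"
proof -
  have g_smooth: "smooth_map S DS C DC g"
    using po unfolding diff_pushout_def by (elim conjE) assumption
  have "(\<lambda>x. x) ` C \<subseteq> P"
    using po unfolding diff_pushout_def by (elim conjE) assumption
  have comm: "\<forall>s\<in>S. fb s = g s"
    using po unfolding diff_pushout_def by (elim conjE) (simp only:)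
  have "\<forall>k U p. DP k U p \<longleftrightarrow> open_in_Rn k U \<and> p ` U \<subseteq> P \<and>
      (\<forall>x\<in>U. \<exists>V. open_in_Rn k V \<and> x \<in> V \<and> V \<subseteq> U \<and>
         ((\<exists>q. DB k V q \<and> (\<forall>y\<in>V. p y = fb (q y))) \<or> (\<exists>q. DC k V q \<and> (\<forall>y\<in>V. p y = q y))))"
    using po unfolding diff_pushout_def by (elim conjE) assumption
  note DP_iff = this[rule_format]
  have "C \<subseteq> P" using \<open>(\<lambda>x. x) ` C \<subseteq> P\<close> by simp
  show ?thesis
  proof (rule induction_inclusionI[OF dC \<open>C \<subseteq> P\<close>])
    fix k U p
    assume "DC k U p"
    have "open_in_Rn k U"
      using diffeology_plotD(1)[OF dC, OF \<open>DC k U p\<close>] .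
    moreover have "p ` U \<subseteq> P"
      using diffeology_plotD(2)[OF dC, OF \<open>DC k U p\<close>] \<open>C \<subseteq> P\<close> by (rule subset_trans)
    moreover have "\<forall>x\<in>U. \<exists>V. open_in_Rn k V \<and> x \<in> V \<and> V \<subseteq> U \<and>
        ((\<exists>q. DB k V q \<and> (\<forall>y\<in>V. p y = fb (q y))) \<or> (\<exists>q. DC k V q \<and> (\<forall>y\<in>V. p y = q y)))"
    proof
      fix x
      assume "x \<in> U"
      have "\<exists>q. DC k U q \<and> (\<forall>y\<in>U. p y = q y)"
        using \<open>DC k U p\<close> by (intro exI[of _ p]) simp
      with \<open>open_in_Rn k U\<close> \<open>x \<in> U\<close> show "\<exists>V. open_in_Rn k V \<and> x \<in> V \<and> V \<subseteq> U \<and>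
          ((\<exists>q. DB k V q \<and> (\<forall>y\<in>V. p y = fb (q y))) \<or> (\<exists>q. DC k V q \<and> (\<forall>y\<in>V. p y = q y)))"
        by (intro exI[of _ U]) simp
    qed
    ultimately show "DP k U p"
      unfolding DP_iff by (intro conjI)
  next
    fix k U p
    assume "DP k U p" and p_C: "p ` U \<subseteq> C"
    note DP_parts = DP_iff[THEN iffD1, OF \<open>DP k U p\<close>]
    have "open_in_Rn k U"
      using DP_parts by (rule conjunct1)
    have local_plots: "\<forall>x\<in>U. \<exists>V. open_in_Rn k V \<and> x \<in> V \<and> V \<subseteq> U \<and>
           ((\<exists>q. DB k V q \<and> (\<forall>y\<in>V. p y = fb (q y))) \<or> (\<exists>q. DC k V q \<and> (\<forall>y\<in>V. p y = q y)))"
      using DP_parts by (elim conjE)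
    show "DC k U p"
    proof (rule diffeology_plot_localI[OF dC, OF \<open>open_in_Rn k U\<close> p_C])
      fix u
      assume "u \<in> U"
      from bspec[OF local_plots this] obtain V where V: "open_in_Rn k V" "u \<in> V" "V \<subseteq> U"
        and V_plot: "(\<exists>q. DB k V q \<and> (\<forall>y\<in>V. p y = fb (q y))) \<or> (\<exists>q. DC k V q \<and> (\<forall>y\<in>V. p y = q y))"
        by (elim exE conjE) (rule that)
      from V_plot have "DC k V p"
      proof (elim disjE exE conjE)
        fix q
        assume "DB k V q" and p_fb_q: "\<forall>y\<in>V. p y = fb (q y)"
        have q_S: "q y \<in> S" if "y \<in> V" for y
        proof (rule diff_pushout_glued_point_in_subspace[OF po])
          show "q y \<in> B" using DB_range[OF \<open>DB k V q\<close>] that by blast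
          show "p y \<in> C" using p_C \<open>V \<subseteq> U\<close> that by blast
          show "fb (q y) = p y" using p_fb_q that by simp
        qed
        have "DS k V q"
          using DS_subspace[OF \<open>DB k V q\<close>] q_S by blast
        then have "DC k V (g \<circ> q)"
          using g_smooth by (simp add: smooth_map_def)
        then show "DC k V p"
          by (rule diffeology_plot_cong[OF dC]) (simp add: p_fb_q q_S comm)
      next
        fix q
        assume "DC k V q" and p_q: "\<forall>y\<in>V. p y = q y"
        show "DC k V p"
          by (rule diffeology_plot_cong[OF dC, OF \<open>DC k V q\<close>]) (simp add: p_q)
      qed
      with V show "\<exists>V. open_in_Rn k V \<and> u \<in> V \<and> V \<subseteq> U \<and> DC k V p"
        by blast
    qed
  qed
qed

lemma coprod_subset_diffeology_restrict:
  assumes "coprod_diffeology J K (\<lambda>j. subset_diffeology (D j) (K j)) k V q"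
    and "q ` V \<subseteq> coprod_set J K'"
  shows "coprod_diffeology J K' (\<lambda>j. subset_diffeology (D j) (K' j)) k V q"
  unfolding coprod_diffeology_def
proof (intro conjI ballI)
  show "open_in_Rn k V" using assms(1) unfolding coprod_diffeology_def by blast
  show "q ` V \<subseteq> coprod_set J K'" by fact
  fix x
  assume "x \<in> V"
  then obtain W j q' where W: "open_in_Rn k W" "x \<in> W" "W \<subseteq> V" "j \<in> J"
    and "subset_diffeology (D j) (K j) k W q'" and q_q': "\<forall>y\<in>W. q y = (j, q' y)"
    using assms(1) unfolding coprod_diffeology_def by blast
  moreover have "q' ` W \<subseteq> K' j"
    using assms(2) W(3) q_q' unfolding coprod_set_def by force
  ultimately show "\<exists>W. open_in_Rn k W \<and> x \<in> W \<and> W \<subseteq> V \<and>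
      (\<exists>j\<in>J. \<exists>q'. subset_diffeology (D j) (K' j) k W q' \<and> (\<forall>y\<in>W. q y = (j, q' y)))"
    unfolding subset_diffeology_def by blast
qed

theorem proposition5p2:
  fixes X :: "'a set" and DX :: "'a diffeology"
    and Xs :: "nat \<Rightarrow> 'a set" and DXs :: "nat \<Rightarrow> 'a diffeology"
    and J :: "nat \<Rightarrow> 'j set" and m :: "nat \<Rightarrow> 'j \<Rightarrow> nat"
    and h hh :: "nat \<Rightarrow> 'j \<times> (vec \<times> vec) \<Rightarrow> 'a"
  assumes "rel_fat_CW X DX Xs DXs J m h hh"
  shows "\<forall>n. induction (Xs n) (DXs n) (Xs (Suc n)) (DXs (Suc n)) (\<lambda>x. x)"
proof
  fix n
  show "induction (Xs n) (DXs n) (Xs (Suc n)) (DXs (Suc n)) (\<lambda>x. x)"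
  proof (rule diff_pushout_along_subspace_induction)
    show "diff_pushout
        (coprod_set (J n) (\<lambda>j. fat_sphere n (m n j)))
        (coprod_diffeology (J n) (\<lambda>j. fat_sphere n (m n j)) (\<lambda>j. fat_sphere_diff n (m n j)))
        (coprod_set (J n) (\<lambda>j. fat_disk n (m n j)))
        (coprod_diffeology (J n) (\<lambda>j. fat_disk n (m n j)) (\<lambda>j. fat_disk_diff n (m n j)))
        (Xs n) (DXs n) (Xs (Suc n)) (DXs (Suc n)) (\<lambda>x. x) (h n) (hh n) (\<lambda>x. x)"
      and "diffeology (Xs n) (DXs n)"
      using assms unfolding rel_fat_CW_def by blast+
  next
    fix k V q
    assume "coprod_diffeology (J n) (\<lambda>j. fat_disk n (m n j)) (\<lambda>j. fat_disk_diff n (m n j)) k V q"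
    then show "q ` V \<subseteq> coprod_set (J n) (\<lambda>j. fat_disk n (m n j))"
      unfolding coprod_diffeology_def by blast
  qed (unfold fat_disk_diff_def fat_sphere_diff_def, rule coprod_subset_diffeology_restrict)
qed

end
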